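(* Let $G\in\mathbb{F}_q^{m\times n}$ have rank $m\le n$, and let $\mathcal{X}$ be a $k$-dimensional affine source over $\mathbb{F}_q^n$, i.e. uniform on $a+V$ for a $k$-dimensional subspace $V\subseteq\mathbb{F}_q^n$ and $a\in\mathbb{F}_q^n$, such that for $X\sim\mathcal{X}$ the distribution of $G\cdot X^\top$ has entropy at least $k'\log q$ (i.e., the linear map defined by $G$ is a $(k\log q)\to_0(k'\log q)$ condenser for $\mathcal{X}$). Let $H\in\mathbb{F}_q^{(n-m)\times n}$ have rank $n-m$ and satisfy $GH^\top=0$, and let $\mathcal{Y}$ be the $(n-k)$-dimensional affine source uniform on $b+V^\perp$ for some $b\in\mathbb{F}_q^n$, where $V^\perp=\{y\in\mathbb{F}_q^n: y\cdot v^\top=0\ \forall v\in V\}$. Then for $Y\sim\mathcal{Y}$, the distribution of $H\cdot Y^\top$ has entropy at least $(n-k+k'-m)\log q$.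
   Context: Logarithms are base 2. The image of an affine source under a linear map is uniform on an affine subspace, so its (Shannon and min-) entropy equals $\log_2$ of the size of that affine subspace. *)

theory Defs
  imports "HOL-Analysis.Analysis" "HOL-Probability.Probability_Mass_Function"
begin

definition shannon_entropy :: "'b pmf \<Rightarrow> real" where
  "shannon_entropy p = (\<Sum>x\<in>set_pmf p. - pmf p x * log 2 (pmf p x))"

definition dotp :: "'a::comm_ring^'n \<Rightarrow> 'a^'n \<Rightarrow> 'a" where
  "dotp y v = (\<Sum>i\<in>UNIV. y $ i * v $ i)"

definition perp :: "('a::comm_ring^'n) set \<Rightarrow> ('a^'n) set" where
  "perp V = {y. \<forall>v\<in>V. dotp y v = 0}"

definition affine_source :: "'a::{finite,ab_group_add}^'n \<Rightarrow> ('a^'n) set \<Rightarrow> ('a^'n) pmf" where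
  "affine_source a V = pmf_of_set ((\<lambda>v. a + v) ` V)"

end

theory Submission
  imports Defs
begin

text \<open>
  Let \<open>K\<close> be the kernel of \<open>G\<close>, of dimension \<open>n - m\<close>. The image of the uniform
  distribution on \<open>a + S\<close> under a linear map \<open>M\<close> is uniform on a coset of \<open>M S\<close>, so its entropy
  is \<open>(dim S - dim (S \<inter> ker M)) log q\<close>. The rows of \<open>H\<close> lie in \<open>K\<close> and span a space of
  dimension \<open>n - m\<close>, hence they span \<open>K\<close> and \<open>ker H = K\<^sup>\<bottom>\<close>. With
  \<open>V\<^sup>\<bottom> \<inter> K\<^sup>\<bottom> = (V + K)\<^sup>\<bottom>\<close>, \<open>dim W\<^sup>\<bottom> = n - dim W\<close> and the dimension formula for
  \<open>V + K\<close>, the entropy of \<open>H Y\<close> is \<open>(dim K - dim (V \<inter> K)) log q\<close>, while that of \<open>G X\<close> is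
  \<open>(dim V - dim (V \<inter> K)) log q \<ge> k' log q\<close>.

  Over a finite field \<open>dim W\<^sup>\<bottom> = n - dim W\<close> is obtained by counting: \<open>A x\<close> is determined by
  the products of \<open>x\<close> with a basis of the row space of \<open>A\<close>, which bounds the size of the column
  space by that of the row space, and applying this to \<open>A\<^sup>T\<close> as well shows row rank = column rank.
\<close>

lemma card_field_ge_2: "CARD('a::{field,finite}) \<ge> 2"
proof -
  have "card {0::'a, 1} \<le> CARD('a)" by (intro card_mono) auto
  then show ?thesis by simp
qed

lemma card_span_independent:
  fixes B :: "('a::{field,finite}^'n) set"
  assumes ind: "vec.independent B"
  shows "card (vec.span B) = CARD('a) ^ card B"
proof -
  have fin: "finite B" by simp
  let ?comb = "\<lambda>u. \<Sum>v\<in>B. u v *s v"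
  have span_eq: "vec.span B = ?comb ` (PiE B (\<lambda>_. UNIV))"
  proof -
    have "?comb u = ?comb (restrict u B)" for u by (intro sum.cong) auto
    then have "range ?comb \<subseteq> ?comb ` (PiE B (\<lambda>_. UNIV))"
      by (auto intro!: image_eqI[of _ _ "restrict _ B"])
    then have "range ?comb = ?comb ` (PiE B (\<lambda>_. UNIV))" by blast
    then show ?thesis using vec.span_finite[OF fin] by simp
  qed
  have "inj_on ?comb (PiE B (\<lambda>_. UNIV))"
  proof (rule inj_onI)
    fix u w assume u: "u \<in> PiE B (\<lambda>_. UNIV)" and w: "w \<in> PiE B (\<lambda>_. UNIV)"
      and "?comb u = ?comb w"
    then have "(\<Sum>v\<in>B. (u v - w v) *s v) = 0"
      by (simp only: vec.scale_left_diff_distrib sum_subtractf diff_self)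
    then have "\<And>v. v \<in> B \<Longrightarrow> u v - w v = 0"
      by (rule vec.independentD[of B B "\<lambda>v. u v - w v", OF ind fin order_refl])
    then show "u = w" using u w by (auto intro: PiE_ext)
  qed
  then have "card (vec.span B) = card (PiE B (\<lambda>_. UNIV::'a set))"
    by (simp add: span_eq card_image)
  also have "\<dots> = CARD('a) ^ card B" by (simp add: card_PiE)
  finally show ?thesis .
qed

lemma card_subspace:
  fixes S :: "('a::{field,finite}^'n) set"
  assumes "vec.subspace S"
  shows "card S = CARD('a) ^ vec.dim S"
proof -
  obtain B where "vec.independent B" "vec.span B = S" "card B = vec.dim S"
    using vec.basis_subspace_exists[OF assms] by metis
  with card_span_independent show ?thesis by force
qed

lemma dim_eq_if_card_eq:
  fixes S :: "('a::{field,finite}^'n) set"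
  assumes "vec.subspace S" "card S = CARD('a) ^ d"
  shows "vec.dim S = d"
proof -
  have "CARD('a) ^ vec.dim S = CARD('a) ^ d" using assms card_subspace by metis
  moreover have "1 < CARD('a)" using card_field_ge_2[where 'a='a] by simp
  ultimately show ?thesis using power_inject_exp by blast
qed

lemma map_pmf_of_set_uniform_fibres:
  assumes fin: "finite A" and ne: "A \<noteq> {}"
    and fibre: "\<And>y. y \<in> f ` A \<Longrightarrow> card {x\<in>A. f x = y} = c"
  shows "card A = c * card (f ` A)" "map_pmf f (pmf_of_set A) = pmf_of_set (f ` A)"
proof -
  have partition: "A = (\<Union>y\<in>f ` A. {x\<in>A. f x = y})" by auto
  have "card A = (\<Sum>y\<in>f ` A. card {x\<in>A. f x = y})"
    by (subst partition, rule card_UN_disjoint) (use fin in auto)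
  also have "\<dots> = c * card (f ` A)" using fibre by simp
  finally show card_A: "card A = c * card (f ` A)" .
  have "c > 0" using card_A fin ne by (cases "c = 0") auto
  show "map_pmf f (pmf_of_set A) = pmf_of_set (f ` A)"
  proof (rule pmf_eqI)
    fix y
    have "pmf (map_pmf f (pmf_of_set A)) y = card {x\<in>A. f x = y} / card A"
      using fin ne by (simp add: pmf_map measure_pmf_of_set vimage_def Int_def)
    then show "pmf (map_pmf f (pmf_of_set A)) y = pmf (pmf_of_set (f ` A)) y"
      using fibre[of y] card_A \<open>c > 0\<close> fin ne by (cases "y \<in> f ` A") (auto simp: pmf_of_set)
  qed
qed

lemma shannon_entropy_pmf_of_set:
  assumes "finite S" "S \<noteq> {}"
  shows "shannon_entropy (pmf_of_set S) = log 2 (card S)"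
proof -
  have "card S > 0" using assms by (simp add: card_gt_0_iff)
  have "shannon_entropy (pmf_of_set S) = (\<Sum>x\<in>S. - (1 / card S) * log 2 (1 / card S))"
    unfolding shannon_entropy_def using assms by (intro sum.cong) (auto simp: pmf_of_set)
  also have "\<dots> = log 2 (card S)" using \<open>card S > 0\<close> by (simp add: log_divide)
  finally show ?thesis .
qed

lemma subspace_perp: "vec.subspace (perp S)"
  unfolding vec.subspace_def perp_def dotp_def
  by (auto simp: sum.distrib distrib_right mult.assoc sum_distrib_left[symmetric])

lemma perp_Un: "perp (A \<union> B) = perp A \<inter> perp B"
  unfolding perp_def by auto

lemma perp_span:
  fixes S :: "('a::field^'n) set"
  shows "perp (vec.span S) = perp S"
proof
  show "perp (vec.span S) \<subseteq> perp S"
    unfolding perp_def using vec.span_superset by blast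
  show "perp S \<subseteq> perp (vec.span S)"
  proof
    fix y assume y: "y \<in> perp S"
    have "vec.subspace {v. dotp y v = 0}"
      unfolding vec.subspace_def dotp_def
      by (auto simp: sum.distrib distrib_left mult.left_commute sum_distrib_left[symmetric])
    moreover have "S \<subseteq> {v. dotp y v = 0}" using y unfolding perp_def by auto
    ultimately have "vec.span S \<subseteq> {v. dotp y v = 0}" by (rule vec.span_minimal[rotated])
    then show "y \<in> perp (vec.span S)" unfolding perp_def by auto
  qed
qed

lemma perp_sums:
  fixes A B :: "('a::field^'n) set"
  assumes "vec.subspace A" "vec.subspace B"
  shows "perp {x + y |x y. x \<in> A \<and> y \<in> B} = perp A \<inter> perp B"
proof -
  have "{x + y |x y. x \<in> A \<and> y \<in> B} = vec.span (A \<union> B)"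
    unfolding vec.span_Un assms[THEN vec.span_eq_iff[THEN iffD2]] ..
  then show ?thesis by (simp add: perp_span perp_Un)
qed

lemma null_space_eq_perp_span_rows:
  fixes A :: "'a::field^'n^'m"
  shows "{x. A *v x = 0} = perp (vec.span (rows A))"
proof -
  have "(A *v x) $ i = dotp x (row i A)" for x i
    by (simp add: matrix_vector_mult_def dotp_def row_def mult.commute)
  moreover have "perp (rows A) = {x. \<forall>i. dotp x (row i A) = 0}"
    unfolding perp_def rows_def by blast
  ultimately have "{x. A *v x = 0} = perp (rows A)" by (auto simp: vec_eq_iff)
  then show ?thesis by (simp add: perp_span)
qed

lemma subspace_null_space: "vec.subspace {x. (A::'a::field^'n^'m) *v x = 0}"
  unfolding null_space_eq_perp_span_rows by (rule subspace_perp)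

lemma affine_source_image:
  fixes M :: "'a::{field,finite}^'n^'m" and S :: "('a^'n) set" and a :: "'a^'n"
  assumes S: "vec.subspace S"
  defines "N \<equiv> S \<inter> {v. M *v v = 0}" and "I \<equiv> (\<lambda>x. M *v x) ` (\<lambda>v. a + v) ` S"
  shows "card S = card N * card I"
    and "map_pmf (\<lambda>x. M *v x) (affine_source a S) = pmf_of_set I"
proof -
  let ?A = "(\<lambda>v. a + v) ` S"
  have "?A \<noteq> {}" using vec.subspace_0[OF S] by blast
  have fibre: "card {x\<in>?A. M *v x = y} = card N" if "y \<in> (\<lambda>x. M *v x) ` ?A" for y
  proof -
    from that obtain s0 where s0: "s0 \<in> S" and y: "y = M *v (a + s0)" by blast
    have "{x\<in>?A. M *v x = y} = (\<lambda>v. a + s0 + v) ` N"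
    proof (intro equalityI subsetI)
      fix x assume "x \<in> {x\<in>?A. M *v x = y}"
      then obtain s where s: "s \<in> S" and x: "x = a + s" and "M *v x = y" by blast
      then have "s - s0 \<in> N"
        using S s0 y vec.subspace_diff by (auto simp: N_def matrix_vector_mult_diff_distrib
            matrix_vector_right_distrib)
      moreover have "x = a + s0 + (s - s0)" using x by simp
      ultimately show "x \<in> (\<lambda>v. a + s0 + v) ` N" by blast
    next
      fix x assume "x \<in> (\<lambda>v. a + s0 + v) ` N"
      then obtain v where v: "v \<in> S" "M *v v = 0" and x: "x = a + (s0 + v)"
        by (auto simp: N_def add.assoc)
      then show "x \<in> {x\<in>?A. M *v x = y}"
        using S s0 y vec.subspace_add by (auto simp: matrix_vector_right_distrib)
    qed
    then show ?thesis by (simp add: card_image)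
  qed
  have "card ?A = card S" by (simp add: card_image)
  then show "card S = card N * card I"
    using map_pmf_of_set_uniform_fibres(1)[OF _ \<open>?A \<noteq> {}\<close> fibre] by (simp add: I_def)
  show "map_pmf (\<lambda>x. M *v x) (affine_source a S) = pmf_of_set I"
    unfolding affine_source_def I_def
    by (rule map_pmf_of_set_uniform_fibres(2)[OF _ \<open>?A \<noteq> {}\<close> fibre]) simp
qed

lemma shannon_entropy_affine_source_image:
  fixes M :: "'a::{field,finite}^'n^'m" and S :: "('a^'n) set"
  assumes S: "vec.subspace S"
  shows "shannon_entropy (map_pmf (\<lambda>x. M *v x) (affine_source a S))
           = (real (vec.dim S) - real (vec.dim (S \<inter> {x. M *v x = 0}))) * log 2 CARD('a)"
proof -
  define N where "N = S \<inter> {x. M *v x = 0}"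
  define I where "I = (\<lambda>x. M *v x) ` (\<lambda>v. a + v) ` S"
  have "vec.subspace N"
    unfolding N_def using S subspace_null_space by (rule vec.subspace_inter)
  have q: "real CARD('a) > 0" by simp
  have "I \<noteq> {}" using vec.subspace_0[OF S] by (auto simp: I_def)
  have "real CARD('a) ^ vec.dim N * card I = real CARD('a) ^ vec.dim S"
    using affine_source_image(1)[OF S, of M a] card_subspace[OF S] card_subspace[OF \<open>vec.subspace N\<close>]
    unfolding N_def I_def by (metis of_nat_mult of_nat_power)
  then have "log 2 (real CARD('a) ^ vec.dim N * card I) = log 2 (real CARD('a) ^ vec.dim S)"
    by simp
  then have "log 2 (card I) = (real (vec.dim S) - real (vec.dim N)) * log 2 CARD('a)"
    using \<open>I \<noteq> {}\<close> q by (simp add: log_mult log_nat_power card_gt_0_iff algebra_simps)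
  then show ?thesis
    unfolding affine_source_image(2)[OF S] using \<open>I \<noteq> {}\<close>
    by (simp add: shannon_entropy_pmf_of_set N_def I_def)
qed

lemma range_matrix_vector_mult_eq_span_columns:
  fixes A :: "'a::field^'n^'m"
  shows "range (\<lambda>x. A *v x) = vec.span (columns A)"
proof
  show "range (\<lambda>x. A *v x) \<subseteq> vec.span (columns A)"
    using matrix_vector_mult_in_columnspace_gen by blast
  have "column i A = A *v axis i 1" for i
    by (simp add: vec_eq_iff column_def matrix_vector_mult_def axis_def if_distrib if_distribR
        sum.delta' cong del: if_weak_cong)
  then have "columns A \<subseteq> range (\<lambda>x. A *v x)" unfolding columns_def by blast
  moreover have "vec.subspace (range (\<lambda>x. A *v x))"
    by (rule vec.subspace_image[OF vec.subspace_UNIV])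
  ultimately show "vec.span (columns A) \<subseteq> range (\<lambda>x. A *v x)" by (rule vec.span_minimal)
qed

lemma card_range_le_card_span_rows:
  fixes A :: "'a::{field,finite}^'n^'m"
  shows "card (range (\<lambda>x. A *v x)) \<le> card (vec.span (rows A))"
proof -
  obtain B where B: "vec.independent B" "vec.span B = vec.span (rows A)"
    using vec.basis_subspace_exists[OF vec.subspace_span] by metis
  have "row i A \<in> vec.span B" for i
    unfolding B(2) rows_def by (intro vec.span_base) blast
  then have "\<forall>i. \<exists>u. row i A = (\<Sum>v\<in>B. u v *s v)"
    using vec.span_finite[of B] by auto
  then obtain u where u: "\<And>i. row i A = (\<Sum>v\<in>B. u i v *s v)" by metis
  define F where "F g = (\<chi> i. \<Sum>v\<in>B. u i v * g v)" for g :: "'a^'n \<Rightarrow> 'a"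
  have "(A *v x) $ i = F (restrict (\<lambda>v. dotp x v) B) $ i" for x i
  proof -
    have "(A *v x) $ i = (\<Sum>j\<in>UNIV. row i A $ j * x $ j)"
      by (simp add: matrix_vector_mult_def row_def)
    also have "\<dots> = (\<Sum>j\<in>UNIV. (\<Sum>v\<in>B. u i v * v $ j) * x $ j)"
      by (simp add: u)
    also have "\<dots> = (\<Sum>v\<in>B. u i v * dotp x v)"
      by (simp add: dotp_def sum_distrib_left sum_distrib_right sum.swap[of _ B] mult_ac)
    finally show ?thesis by (simp add: F_def)
  qed
  then have "range (\<lambda>x. A *v x) \<subseteq> F ` (PiE B (\<lambda>_. UNIV))"
    by (auto simp: vec_eq_iff)
  then have "card (range (\<lambda>x. A *v x)) \<le> card (PiE B (\<lambda>_. UNIV::'a set))"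
    by (meson card_image_le card_mono finite_PiE finite order_trans)
  also have "\<dots> = card (vec.span (rows A))"
    using card_span_independent[OF B(1)] by (simp add: B(2) card_PiE)
  finally show ?thesis .
qed

lemma card_range_matrix_vector_mult:
  fixes A :: "'a::{field,finite}^'n^'m"
  shows "card (range (\<lambda>x. A *v x)) = CARD('a) ^ rank A"
proof -
  have "card (vec.span (rows A)) = card (range (\<lambda>x. transpose A *v x))"
    by (metis columns_transpose range_matrix_vector_mult_eq_span_columns)
  also have "\<dots> \<le> card (vec.span (columns A))"
    by (rule card_range_le_card_span_rows[of "transpose A", unfolded rows_transpose])
  also have "\<dots> = card (range (\<lambda>x. A *v x))"
    by (simp add: range_matrix_vector_mult_eq_span_columns)
  finally have "card (range (\<lambda>x. A *v x)) = card (vec.span (rows A))"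
    using card_range_le_card_span_rows[of A] by linarith
  also have "\<dots> = CARD('a) ^ rank A"
    by (simp add: card_subspace row_rank_def_gen)
  finally show ?thesis .
qed

lemma dim_null_space:
  fixes A :: "'a::{field,finite}^'n^'m"
  shows "vec.dim {x. A *v x = 0} = CARD('n) - rank A"
proof (rule dim_eq_if_card_eq[OF subspace_null_space])
  have "rank A \<le> CARD('n)" unfolding row_rank_def_gen by (rule dim_subset_UNIV_cart_gen)
  then have "card {x. A *v x = 0} * CARD('a) ^ rank A = CARD('a) ^ (CARD('n) - rank A) * CARD('a) ^ rank A"
    using affine_source_image(1)[OF vec.subspace_UNIV, of A 0]
    by (simp add: card_range_matrix_vector_mult flip: power_add)
  then show "card {x. A *v x = 0} = CARD('a) ^ (CARD('n) - rank A)" by simp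
qed

lemma ex_square_matrix_span_rows:
  fixes W :: "('a::field^'n) set"
  assumes W: "vec.subspace W"
  obtains A :: "'a^'n^'n" where "vec.span (rows A) = W"
proof -
  obtain B where B: "finite B" "vec.independent B" "vec.span B = W" "card B = vec.dim W"
    using vec.basis_subspace_exists[OF W] by metis
  then have "card B \<le> CARD('n)" using dim_subset_UNIV_cart_gen[of W] by simp
  then obtain f :: "'a^'n \<Rightarrow> 'n" where f: "inj_on f B"
    using card_le_inj[of B "UNIV :: 'n set"] B(1) by auto
  define A :: "'a^'n^'n" where "A = (\<chi> i. if i \<in> f ` B then inv_into B f i else 0)"
  have "rows A \<subseteq> insert 0 B"
    by (auto simp: rows_def row_def A_def inv_into_into)
  moreover have "B \<subseteq> rows A"
  proof
    fix b assume "b \<in> B"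
    then have "row (f b) A = b" using f by (simp add: row_def A_def)
    then show "b \<in> rows A" unfolding rows_def by (metis (mono_tags) UNIV_I mem_Collect_eq)
  qed
  ultimately have "vec.span (rows A) = vec.span B"
    by (metis subset_antisym vec.span_insert_0 vec.span_mono)
  with B(3) show ?thesis using that by simp
qed

lemma dim_perp:
  fixes W :: "('a::{field,finite}^'n) set"
  assumes "vec.subspace W"
  shows "vec.dim (perp W) = CARD('n) - vec.dim W"
proof -
  obtain A :: "'a^'n^'n" where A: "vec.span (rows A) = W"
    using ex_square_matrix_span_rows[OF assms] .
  then have "perp W = {x. A *v x = 0}" by (simp add: null_space_eq_perp_span_rows)
  moreover have "rank A = vec.dim W" by (simp add: row_rank_def_gen flip: A)
  ultimately show ?thesis by (simp add: dim_null_space)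
qed

lemma span_rows_eq_null_space:
  fixes G :: "'a::{field,finite}^'n^'m" and H :: "'a^'n^'h"
  assumes GH: "G ** transpose H = 0" and rank_H: "rank H = CARD('n) - rank G"
  shows "vec.span (rows H) = {x. G *v x = 0}"
proof (rule vec.subspace_dim_equal[OF vec.subspace_span subspace_null_space])
  have "G *v row j H = 0" for j
  proof -
    have "(G *v row j H) $ i = (G ** transpose H) $ i $ j" for i
      by (simp add: matrix_vector_mult_def matrix_matrix_mult_def transpose_def row_def)
    then show ?thesis using GH by (simp add: vec_eq_iff)
  qed
  then have "rows H \<subseteq> {x. G *v x = 0}" unfolding rows_def by blast
  then show "vec.span (rows H) \<subseteq> {x. G *v x = 0}"
    by (rule vec.span_minimal[OF _ subspace_null_space])
  show "vec.dim {x. G *v x = 0} \<le> vec.dim (vec.span (rows H))"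
    using rank_H by (simp add: dim_null_space row_rank_def_gen)
qed

theorem mainTheorem19:
  fixes G :: "'a::{field,finite}^'n^'m"
    and H :: "'a^'n^'h"
    and V :: "('a^'n) set"
    and a b :: "'a^'n"
    and k :: nat
    and k' :: real
  assumes rankG: "rank G = CARD('m)"
    and m_le_n: "CARD('m) \<le> CARD('n)"
    and V_sub: "vec.subspace V"
    and V_dim: "vec.dim V = k"
    and cond: "shannon_entropy (map_pmf (\<lambda>x. G *v x) (affine_source a V))
                 \<ge> k' * log 2 (real CARD('a))"
    and H_rows: "CARD('h) = CARD('n) - CARD('m)"
    and rankH: "rank H = CARD('n) - CARD('m)"
    and GH: "G ** transpose H = 0"
  shows "shannon_entropy (map_pmf (\<lambda>y. H *v y) (affine_source b (perp V)))
           \<ge> (real CARD('n) - real k + k' - real CARD('m)) * log 2 (real CARD('a))"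
proof -
  define K where "K = {x. G *v x = 0}"
  define S where "S = {x + y |x y. x \<in> V \<and> y \<in> K}"
  have K: "vec.subspace K" "vec.dim K = CARD('n) - CARD('m)"
    using rankG by (simp_all add: K_def subspace_null_space dim_null_space)
  have "vec.subspace S" unfolding S_def using V_sub K(1) by (rule vec.subspace_sums)
  have dim_S: "vec.dim S + vec.dim (V \<inter> K) = k + (CARD('n) - CARD('m))"
    using vec.dim_sums_Int[OF V_sub K(1)] V_dim K(2) by (simp add: S_def)
  have "perp V \<inter> {y. H *v y = 0} = perp S"
    using span_rows_eq_null_space[OF GH] rankG rankH V_sub K(1)
    by (simp add: S_def K_def perp_sums null_space_eq_perp_span_rows)
  then have entropy_H: "shannon_entropy (map_pmf (\<lambda>y. H *v y) (affine_source b (perp V)))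
      = (real (CARD('n) - k) - real (CARD('n) - vec.dim S)) * log 2 CARD('a)"
    using V_dim \<open>vec.subspace S\<close>
    by (simp add: shannon_entropy_affine_source_image subspace_perp dim_perp V_sub)
  have entropy_G: "shannon_entropy (map_pmf (\<lambda>x. G *v x) (affine_source a V))
      = (real k - real (vec.dim (V \<inter> K))) * log 2 CARD('a)"
    using V_dim by (simp add: shannon_entropy_affine_source_image V_sub K_def)
  have "log 2 CARD('a) > 0" using card_field_ge_2[where 'a='a] by simp
  then have "k' \<le> real k - real (vec.dim (V \<inter> K))"
    using cond unfolding entropy_G by simp
  moreover have "k \<le> CARD('n)" "vec.dim S \<le> CARD('n)"
    using V_dim dim_subset_UNIV_cart_gen by auto
  ultimately show ?thesis
    unfolding entropy_H using dim_S m_le_n \<open>log 2 CARD('a) > 0\<close>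
    by (intro mult_right_mono) linarith+
qed

end
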